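(* Assume each bus has either no generator or at least two generators, and $x^*_n>0$ for all $n$; let $b^*$ be the unique efficient Nash equilibrium, $b^*_n=2a_nx^*_n+c_n$. Consider an execution of the Bid Adjustment Algorithm with $0<\beta_k<2a_n$ for all $n$ and $k\ge1$. Let $0<r<\|b(1)-b^*\|$ and assume that for all $k\ge1$, $$\alpha\le\beta_k\le B(r):=\frac{1}{2a_{\max}}\Bigl(\frac{1}{2a_{\min}^2}+\frac{16\bar y^2}{r^2}\Bigr)^{-1}$$ for some $\alpha>0$, where $a_{\max}=\max_na_n$, $a_{\min}=\min_na_n$, $\bar y=\sum_iy_i$. Then: (i) there exists $l\ge1$ such that $\|b(l)-b^*\|<r$ and, for all $k\in\{1,\dots,l-1\}$, $\|b(k)-b^*\|\ge r$ and $$\|b(k+1)-b^*\|\le\Bigl(1-\frac{\alpha}{2a_{\max}}\Bigr)^{k/2}\|b(1)-b^*\|;$$ (ii) for all $k\ge l$, $\|b(k)-b^*\|\le\bigl(1+\frac{B(r)}{2a_{\max}}\bigr)^{1/2}r$.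
   Context: Network: directed graph with buses $\{1,\dots,N_b\}$, edge set $\mathcal E$, line flow limits $\bar z_{ij}>0$, $G_i$ the set of generators at bus $i$ (the $G_i$ partition $\{1,\dots,N\}$), loads $y_i\ge0$. Generator $n$ has cost $f_n(x)=a_nx^2+c_nx$, $a_n>0$, $c_n\ge0$. DC-OPF: minimize $\sum_n f_n(x_n)$ over $(x,z)$ s.t. $\sum_{j:(i,j)\in\mathcal E}z_{ij}-\sum_{j:(j,i)\in\mathcal E}z_{ji}=\sum_{n\in G_i}x_n-y_i$ for all $i$, $|z_{ij}|\le\bar z_{ij}$, $x\ge0$; assumed feasible with optimizer $(x^*,z^* )$, $x^*$ unique. S-DC-OPF given bids $b\ge0$: same constraints, objective $\sum_n b_nx_n$. An efficient Nash equilibrium is in particular a bid $b^*$ for which $(x^*,z^* )$ optimizes S-DC-OPF with bids $b^*$ and $x^*_n=\arg\max_{x\ge0}(b^*_nx-f_n(x))$. $\|\cdot\|$ is the Euclidean norm. Bid Adjustment Algorithm: given stepsizes $\beta_k>0$, each generator picks $b_n(1)\ge c_n$. For each $k\ge1$: $q_n(k)=\arg\max_{q\ge0}(b_n(k)q-f_n(q))$; the operator selects an optimizer $(x^{\rm opt}(k),z^{\rm opt}(k))$ of S-DC-OPF with bids $b(k)$; and $b_n(k+1)=[\,b_n(k)+\beta_k(x^{\rm opt}_n(k)-q_n(k))\,]^+$, where $[u]^+=\max\{0,u\}$. *)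

theory Defs
  imports Complex_Main
begin

(* Buses are {1..Nb}, generators are {1..N}; edges E are pairs of buses;
   flows z and limits zbar are functions on pairs; G i is the generator set of bus i. *)

definition network_ok ::
  "nat \<Rightarrow> (nat \<times> nat) set \<Rightarrow> (nat \<times> nat \<Rightarrow> real) \<Rightarrow> (nat \<Rightarrow> nat set) \<Rightarrow> (nat \<Rightarrow> real)
   \<Rightarrow> nat \<Rightarrow> (nat \<Rightarrow> real) \<Rightarrow> (nat \<Rightarrow> real) \<Rightarrow> bool" where
  "network_ok Nb E zbar G y N a c \<longleftrightarrow>
     finite E \<and> E \<subseteq> {1..Nb} \<times> {1..Nb} \<and> (\<forall>e\<in>E. zbar e > 0) \<and>
     (\<forall>i\<in>{1..Nb}. G i \<subseteq> {1..N}) \<and>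
     (\<forall>i\<in>{1..Nb}. \<forall>j\<in>{1..Nb}. i \<noteq> j \<longrightarrow> G i \<inter> G j = {}) \<and>
     (\<Union>i\<in>{1..Nb}. G i) = {1..N} \<and>
     (\<forall>i\<in>{1..Nb}. y i \<ge> 0) \<and>
     (\<forall>n\<in>{1..N}. a n > 0 \<and> c n \<ge> 0)"

definition gen_cost :: "(nat \<Rightarrow> real) \<Rightarrow> (nat \<Rightarrow> real) \<Rightarrow> nat \<Rightarrow> real \<Rightarrow> real" where
  "gen_cost a c n x = a n * x\<^sup>2 + c n * x"

definition opf_feasible ::
  "nat \<Rightarrow> (nat \<times> nat) set \<Rightarrow> (nat \<times> nat \<Rightarrow> real) \<Rightarrow> (nat \<Rightarrow> nat set) \<Rightarrow> (nat \<Rightarrow> real)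
   \<Rightarrow> nat \<Rightarrow> (nat \<Rightarrow> real) \<Rightarrow> (nat \<times> nat \<Rightarrow> real) \<Rightarrow> bool" where
  "opf_feasible Nb E zbar G y N x z \<longleftrightarrow>
     (\<forall>i\<in>{1..Nb}. (\<Sum>j\<in>{j. (i, j) \<in> E}. z (i, j)) - (\<Sum>j\<in>{j. (j, i) \<in> E}. z (j, i))
                    = (\<Sum>n\<in>G i. x n) - y i) \<and>
     (\<forall>e\<in>E. \<bar>z e\<bar> \<le> zbar e) \<and>
     (\<forall>n\<in>{1..N}. x n \<ge> 0)"

definition dcopf_opt ::
  "nat \<Rightarrow> (nat \<times> nat) set \<Rightarrow> (nat \<times> nat \<Rightarrow> real) \<Rightarrow> (nat \<Rightarrow> nat set) \<Rightarrow> (nat \<Rightarrow> real)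
   \<Rightarrow> nat \<Rightarrow> (nat \<Rightarrow> real) \<Rightarrow> (nat \<Rightarrow> real) \<Rightarrow> (nat \<Rightarrow> real) \<Rightarrow> (nat \<times> nat \<Rightarrow> real) \<Rightarrow> bool" where
  "dcopf_opt Nb E zbar G y N a c x z \<longleftrightarrow>
     opf_feasible Nb E zbar G y N x z \<and>
     (\<forall>x' z'. opf_feasible Nb E zbar G y N x' z' \<longrightarrow>
        (\<Sum>n\<in>{1..N}. gen_cost a c n (x n)) \<le> (\<Sum>n\<in>{1..N}. gen_cost a c n (x' n)))"

definition sdcopf_opt ::
  "nat \<Rightarrow> (nat \<times> nat) set \<Rightarrow> (nat \<times> nat \<Rightarrow> real) \<Rightarrow> (nat \<Rightarrow> nat set) \<Rightarrow> (nat \<Rightarrow> real)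
   \<Rightarrow> nat \<Rightarrow> (nat \<Rightarrow> real) \<Rightarrow> (nat \<Rightarrow> real) \<Rightarrow> (nat \<times> nat \<Rightarrow> real) \<Rightarrow> bool" where
  "sdcopf_opt Nb E zbar G y N b x z \<longleftrightarrow>
     opf_feasible Nb E zbar G y N x z \<and>
     (\<forall>x' z'. opf_feasible Nb E zbar G y N x' z' \<longrightarrow>
        (\<Sum>n\<in>{1..N}. b n * x n) \<le> (\<Sum>n\<in>{1..N}. b n * x' n))"

definition best_response :: "(nat \<Rightarrow> real) \<Rightarrow> (nat \<Rightarrow> real) \<Rightarrow> nat \<Rightarrow> real \<Rightarrow> real" where
  "best_response a c n bid = arg_max (\<lambda>q. bid * q - gen_cost a c n q) (\<lambda>q. q \<ge> 0)"

(* An execution of the Bid Adjustment Algorithm: b k n = b_n(k), xo k, zo k = operator's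
   selected S-DC-OPF optimizer at iteration k (k >= 1). *)
definition bid_adjust_exec ::
  "nat \<Rightarrow> (nat \<times> nat) set \<Rightarrow> (nat \<times> nat \<Rightarrow> real) \<Rightarrow> (nat \<Rightarrow> nat set) \<Rightarrow> (nat \<Rightarrow> real)
   \<Rightarrow> nat \<Rightarrow> (nat \<Rightarrow> real) \<Rightarrow> (nat \<Rightarrow> real) \<Rightarrow> (nat \<Rightarrow> real)
   \<Rightarrow> (nat \<Rightarrow> nat \<Rightarrow> real) \<Rightarrow> (nat \<Rightarrow> nat \<Rightarrow> real) \<Rightarrow> (nat \<Rightarrow> nat \<times> nat \<Rightarrow> real) \<Rightarrow> bool" where
  "bid_adjust_exec Nb E zbar G y N a c beta b xo zo \<longleftrightarrow>
     (\<forall>k\<ge>1. beta k > 0) \<and>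
     (\<forall>n\<in>{1..N}. b 1 n \<ge> c n) \<and>
     (\<forall>k\<ge>1. sdcopf_opt Nb E zbar G y N (b k) (xo k) (zo k) \<and>
        (\<forall>n\<in>{1..N}. b (Suc k) n =
            max 0 (b k n + beta k * (xo k n - best_response a c n (b k n)))))"

definition bid_dist :: "nat \<Rightarrow> (nat \<Rightarrow> real) \<Rightarrow> (nat \<Rightarrow> real) \<Rightarrow> real" where
  "bid_dist N b b' = sqrt (\<Sum>n\<in>{1..N}. (b n - b' n)\<^sup>2)"

definition step_bound :: "real \<Rightarrow> real \<Rightarrow> real \<Rightarrow> real \<Rightarrow> real" where
  "step_bound amax amin ybar r = (1 / (2 * amax)) * inverse (1 / (2 * amin\<^sup>2) + 16 * ybar\<^sup>2 / r\<^sup>2)"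

end

theory Submission
  imports Defs
begin

(*
Write e = b(k) - b\<^sup>* and x(k) for the dispatch chosen by the operator. Bids never fall below
c\<^sub>n and \<beta>\<^sub>k < 2a\<^sub>n, so the projection [\<cdot>]\<^sup>+ never acts and the best response is
(b\<^sub>n - c\<^sub>n)/(2a\<^sub>n); hence b(k+1) - b\<^sup>* = e + \<beta>\<^sub>k (x(k) - x\<^sup>* - e/(2a)).
Both x(k) and x\<^sup>* solve the linear program over the same feasible polytope, with bids b(k) and
with the marginal costs b\<^sup>* respectively, so the cross term \<langle>e, x(k) - x\<^sup>*\<rangle> is nonpositive; both
dispatches produce the total load Y = \<Sum> y\<^sub>i, so \<parallel>x(k) - x\<^sup>*\<parallel>\<^sup>2 \<le> 2Y\<^sup>2. Expanding the square gives
\<parallel>e'\<parallel>\<^sup>2 \<le> \<parallel>e\<parallel>\<^sup>2 - \<beta>\<parallel>e\<parallel>\<^sup>2/a\<^sub>m\<^sub>a\<^sub>x + \<beta>\<^sup>2 (4Y\<^sup>2 + \<parallel>e\<parallel>\<^sup>2/(2a\<^sub>m\<^sub>i\<^sub>n\<^sup>2)), and \<beta> \<le> B(r) turns this into a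
contraction by 1 - \<alpha>/(2a\<^sub>m\<^sub>a\<^sub>x) while \<parallel>e\<parallel> \<ge> r, and into \<parallel>e'\<parallel>\<^sup>2 \<le> (1 + B(r)/(2a\<^sub>m\<^sub>a\<^sub>x)) r\<^sup>2
once \<parallel>e\<parallel> < r.
*)

lemma best_response_eq:
  assumes "0 < a n" and "c n \<le> bid"
  shows "best_response a c n bid = (bid - c n) / (2 * a n)"
proof -
  define f where "f q = bid * q - gen_cost a c n q" for q
  define q0 where "q0 = (bid - c n) / (2 * a n)"
  have "0 \<le> q0" using assms by (simp add: q0_def)
  have gap: "f q0 - f q = a n * (q - q0)\<^sup>2" for q
    using \<open>0 < a n\<close> unfolding f_def gen_cost_def q0_def
    by (simp add: field_simps power2_eq_square)
  have le_q0: "f q \<le> f q0" for q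
    using gap[of q] \<open>0 < a n\<close> by (smt (verit) mult_nonneg_nonneg zero_le_power2)
  have "is_arg_max f (\<lambda>q. 0 \<le> q) = (\<lambda>x. x = q0)"
  proof (intro ext iffI)
    fix x
    assume "is_arg_max f (\<lambda>q. 0 \<le> q) x"
    then have "\<not> f x < f q0" using \<open>0 \<le> q0\<close> unfolding is_arg_max_def by blast
    then have "a n * (x - q0)\<^sup>2 \<le> 0" using gap[of x] by linarith
    then show "x = q0" using \<open>0 < a n\<close> by (simp add: mult_le_0_iff)
  qed (use \<open>0 \<le> q0\<close> le_q0 in \<open>auto simp: is_arg_max_def not_less\<close>)
  then show ?thesis
    unfolding best_response_def arg_max_def f_def[symmetric] q0_def[symmetric] by simp
qed

lemma opf_feasible_segment:
  assumes "opf_feasible Nb E zbar G y N x z" and "opf_feasible Nb E zbar G y N x' z'"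
    and "0 \<le> t" and "t \<le> 1"
  shows "opf_feasible Nb E zbar G y N (\<lambda>n. (1 - t) * x n + t * x' n) (\<lambda>e. (1 - t) * z e + t * z' e)"
  unfolding opf_feasible_def
proof (intro conjI ballI)
  fix i assume "i \<in> {1..Nb}"
  let ?out = "\<lambda>z. \<Sum>j\<in>{j. (i, j) \<in> E}. z (i, j)" and ?into = "\<lambda>z. \<Sum>j\<in>{j. (j, i) \<in> E}. z (j, i)"
    and ?gen = "\<lambda>x. \<Sum>n\<in>G i. x n"
  have balance: "?out z - ?into z = ?gen x - y i" "?out z' - ?into z' = ?gen x' - y i"
    using assms(1,2) \<open>i \<in> {1..Nb}\<close> unfolding opf_feasible_def by blast+
  have comb: "(\<Sum>j\<in>A. (1 - t) * f j + t * g j) = (1 - t) * sum f A + t * sum g A"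
    for A and f g :: "_ \<Rightarrow> real"
    by (simp add: sum.distrib sum_distrib_left)
  have "?out (\<lambda>e. (1 - t) * z e + t * z' e) - ?into (\<lambda>e. (1 - t) * z e + t * z' e)
      = (1 - t) * (?out z - ?into z) + t * (?out z' - ?into z')"
    by (simp only: comb) (simp add: algebra_simps)
  also have "\<dots> = (1 - t) * (?gen x - y i) + t * (?gen x' - y i)"
    using balance by simp
  also have "\<dots> = ?gen (\<lambda>n. (1 - t) * x n + t * x' n) - y i"
    by (simp only: comb) (simp add: algebra_simps)
  finally show "?out (\<lambda>e. (1 - t) * z e + t * z' e) - ?into (\<lambda>e. (1 - t) * z e + t * z' e)
      = ?gen (\<lambda>n. (1 - t) * x n + t * x' n) - y i" .
next
  fix e assume "e \<in> E"
  then have "\<bar>z e\<bar> \<le> zbar e" "\<bar>z' e\<bar> \<le> zbar e" using assms(1,2) unfolding opf_feasible_def by auto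
  have "\<bar>(1 - t) * z e + t * z' e\<bar> \<le> (1 - t) * \<bar>z e\<bar> + t * \<bar>z' e\<bar>"
    using abs_triangle_ineq[of "(1 - t) * z e" "t * z' e"] assms(3,4) by (simp add: abs_mult)
  also have "\<dots> \<le> (1 - t) * zbar e + t * zbar e"
    using assms(3,4) \<open>\<bar>z e\<bar> \<le> zbar e\<close> \<open>\<bar>z' e\<bar> \<le> zbar e\<close> by (intro add_mono mult_left_mono) auto
  finally show "\<bar>(1 - t) * z e + t * z' e\<bar> \<le> zbar e" by (simp add: algebra_simps)
next
  fix n assume "n \<in> {1..N}"
  then show "0 \<le> (1 - t) * x n + t * x' n"
    using assms unfolding opf_feasible_def by simp
qed

lemma quadratic_nonneg_imp_linear_nonneg:
  fixes g A :: real
  assumes "0 \<le> A" and "\<And>t. 0 < t \<Longrightarrow> t \<le> 1 \<Longrightarrow> 0 \<le> t * g + t\<^sup>2 * A"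
  shows "0 \<le> g"
proof (rule ccontr)
  assume "\<not> 0 \<le> g"
  define t where "t = - g / (- g + 2 * A + 1)"
  have t: "0 < t" "t \<le> 1" using \<open>\<not> 0 \<le> g\<close> \<open>0 \<le> A\<close> by (auto simp: t_def divide_simps)
  have "t * A < - g"
    using \<open>\<not> 0 \<le> g\<close> \<open>0 \<le> A\<close> mult_neg_pos[of g "1 + A"]
    by (simp add: t_def field_simps) (smt (verit) zero_le_square)
  moreover have "0 \<le> t * (g + t * A)"
    using assms(2)[OF t] by (simp add: algebra_simps power2_eq_square)
  ultimately show False using t by (simp add: zero_le_mult_iff)
qed

text \<open>First-order optimality: if the marginal-cost objective decreased along a feasible segment,
  the convex cost would decrease near its start.\<close>

lemma dcopf_opt_imp_sdcopf_opt_marginal_costs: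
  assumes net: "network_ok Nb E zbar G y N a c"
    and opt: "dcopf_opt Nb E zbar G y N a c xs zs"
    and bs: "\<forall>n\<in>{1..N}. bs n = 2 * a n * xs n + c n"
  shows "sdcopf_opt Nb E zbar G y N bs xs zs"
  unfolding sdcopf_opt_def
proof (intro conjI allI impI)
  show feas: "opf_feasible Nb E zbar G y N xs zs" using opt unfolding dcopf_opt_def by blast
  fix x' z' assume feas': "opf_feasible Nb E zbar G y N x' z'"
  let ?I = "{1..N}" and ?d = "\<lambda>n. x' n - xs n"
  let ?cost = "\<lambda>x. \<Sum>n\<in>?I. gen_cost a c n (x n)"
  have "0 \<le> t * (\<Sum>n\<in>?I. bs n * ?d n) + t\<^sup>2 * (\<Sum>n\<in>?I. a n * (?d n)\<^sup>2)"
    if "0 < t" "t \<le> 1" for t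
  proof -
    have "opf_feasible Nb E zbar G y N (\<lambda>n. (1 - t) * xs n + t * x' n) (\<lambda>e. (1 - t) * zs e + t * z' e)"
      using opf_feasible_segment[OF feas feas'] that by simp
    then have "?cost xs \<le> ?cost (\<lambda>n. (1 - t) * xs n + t * x' n)"
      using opt unfolding dcopf_opt_def by blast
    also have "\<dots> = (\<Sum>n\<in>?I. gen_cost a c n (xs n) + t * (bs n * ?d n) + t\<^sup>2 * (a n * (?d n)\<^sup>2))"
      using bs unfolding gen_cost_def
      by (intro sum.cong) (simp_all add: power2_eq_square algebra_simps)
    also have "\<dots> = ?cost xs + t * (\<Sum>n\<in>?I. bs n * ?d n) + t\<^sup>2 * (\<Sum>n\<in>?I. a n * (?d n)\<^sup>2)"
      by (simp add: sum.distrib sum_distrib_left)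
    finally show ?thesis by simp
  qed
  moreover have "0 \<le> (\<Sum>n\<in>?I. a n * (?d n)\<^sup>2)"
    using net unfolding network_ok_def by (auto intro!: sum_nonneg)
  ultimately have "0 \<le> (\<Sum>n\<in>?I. bs n * ?d n)"
    using quadratic_nonneg_imp_linear_nonneg by blast
  then show "(\<Sum>n\<in>?I. bs n * xs n) \<le> (\<Sum>n\<in>?I. bs n * x' n)"
    by (simp add: right_diff_distrib sum_subtractf)
qed

lemma sdcopf_opt_monotone:
  assumes "sdcopf_opt Nb E zbar G y N b x z" and "sdcopf_opt Nb E zbar G y N b' x' z'"
  shows "(\<Sum>n\<in>{1..N}. (b n - b' n) * (x n - x' n)) \<le> 0"
proof -
  have "(\<Sum>n\<in>{1..N}. b n * x n) \<le> (\<Sum>n\<in>{1..N}. b n * x' n)"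
    "(\<Sum>n\<in>{1..N}. b' n * x' n) \<le> (\<Sum>n\<in>{1..N}. b' n * x n)"
    using assms unfolding sdcopf_opt_def by blast+
  then show ?thesis by (simp add: algebra_simps sum.distrib sum_subtractf)
qed

lemma sum_net_outflow_eq_0:
  fixes z :: "'a \<times> 'a \<Rightarrow> real"
  assumes "finite B" and "E \<subseteq> B \<times> B"
  shows "(\<Sum>i\<in>B. (\<Sum>j\<in>{j. (i, j) \<in> E}. z (i, j)) - (\<Sum>j\<in>{j. (j, i) \<in> E}. z (j, i))) = 0"
proof -
  define g where "g p = (if p \<in> E then z p else 0)" for p
  have "{j. (i, j) \<in> E} = {j \<in> B. (i, j) \<in> E}" "{j. (j, i) \<in> E} = {j \<in> B. (j, i) \<in> E}" for i
    using assms(2) by blast+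
  then have "(\<Sum>j\<in>{j. (i, j) \<in> E}. z (i, j)) = (\<Sum>j\<in>B. g (i, j))"
    "(\<Sum>j\<in>{j. (j, i) \<in> E}. z (j, i)) = (\<Sum>j\<in>B. g (j, i))" for i
    using assms(1) by (simp_all add: sum.inter_filter g_def)
  then show ?thesis
    by (simp only: sum_subtractf sum.swap[of "\<lambda>i j. g (j, i)" B B])
qed

lemma opf_feasible_total_generation:
  assumes net: "network_ok Nb E zbar G y N a c"
    and feas: "opf_feasible Nb E zbar G y N x z"
  shows "(\<Sum>n\<in>{1..N}. x n) = (\<Sum>i\<in>{1..Nb}. y i)"
proof -
  have E: "E \<subseteq> {1..Nb} \<times> {1..Nb}" using net unfolding network_ok_def by (elim conjE)
  have G_sub: "\<forall>i\<in>{1..Nb}. G i \<subseteq> {1..N}" using net unfolding network_ok_def by (elim conjE)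
  have disjoint: "\<forall>i\<in>{1..Nb}. \<forall>j\<in>{1..Nb}. i \<noteq> j \<longrightarrow> G i \<inter> G j = {}"
    using net unfolding network_ok_def by (elim conjE)
  have cover: "(\<Union>i\<in>{1..Nb}. G i) = {1..N}" using net unfolding network_ok_def by (elim conjE)
  from E have "(\<Sum>i\<in>{1..Nb}. (\<Sum>j\<in>{j. (i, j) \<in> E}. z (i, j)) - (\<Sum>j\<in>{j. (j, i) \<in> E}. z (j, i))) = 0"
    by (intro sum_net_outflow_eq_0) simp_all
  moreover have "(\<Sum>j\<in>{j. (i, j) \<in> E}. z (i, j)) - (\<Sum>j\<in>{j. (j, i) \<in> E}. z (j, i))
      = (\<Sum>n\<in>G i. x n) - y i" if "i \<in> {1..Nb}" for i
    using feas that unfolding opf_feasible_def by blast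
  ultimately have "(\<Sum>i\<in>{1..Nb}. (\<Sum>n\<in>G i. x n) - y i) = 0" by simp
  moreover have "(\<Sum>n\<in>{1..N}. x n) = (\<Sum>i\<in>{1..Nb}. \<Sum>n\<in>G i. x n)"
    using sum.UNION_disjoint[of "{1..Nb}" G x] G_sub disjoint cover finite_subset[of _ "{1..N}"] by simp
  ultimately show ?thesis by (simp add: sum_subtractf)
qed

lemma sum_sq_diff_le_of_equal_sums:
  fixes u v :: "'a \<Rightarrow> real"
  assumes "finite I" and "\<forall>n\<in>I. 0 \<le> u n \<and> 0 \<le> v n"
    and "sum u I = Y" and "sum v I = Y"
  shows "(\<Sum>n\<in>I. (u n - v n)\<^sup>2) \<le> 2 * Y\<^sup>2"
proof -
  have sum_sq: "(\<Sum>n\<in>I. (w n)\<^sup>2) \<le> Y\<^sup>2" if "\<forall>n\<in>I. 0 \<le> w n" "sum w I = Y" for w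
  proof -
    have "(\<Sum>n\<in>I. (w n)\<^sup>2) \<le> (\<Sum>n\<in>I. w n * Y)"
    proof (rule sum_mono)
      fix n assume "n \<in> I"
      then have "w n \<le> Y" using that member_le_sum[of n I w] assms(1) by auto
      then show "(w n)\<^sup>2 \<le> w n * Y" using that \<open>n \<in> I\<close> by (simp add: power2_eq_square mult_left_mono)
    qed
    also have "\<dots> = Y\<^sup>2" using that by (simp add: sum_distrib_right[symmetric] power2_eq_square)
    finally show ?thesis .
  qed
  have "(\<Sum>n\<in>I. (u n - v n)\<^sup>2) \<le> (\<Sum>n\<in>I. (u n)\<^sup>2 + (v n)\<^sup>2)"
    using assms(2) by (intro sum_mono) (simp add: power2_diff)
  also have "\<dots> \<le> Y\<^sup>2 + Y\<^sup>2" using sum_sq[of u] sum_sq[of v] assms by (simp add: sum.distrib)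
  finally show ?thesis by simp
qed

lemma sum_sq_diff_scaled_le:
  fixes w e a :: "'a \<Rightarrow> real"
  assumes "\<forall>n\<in>I. 0 < amin \<and> amin \<le> a n"
  shows "(\<Sum>n\<in>I. (w n - e n / (2 * a n))\<^sup>2) \<le> 2 * (\<Sum>n\<in>I. (w n)\<^sup>2) + (\<Sum>n\<in>I. (e n)\<^sup>2) / (2 * amin\<^sup>2)"
proof -
  have "(w n - e n / (2 * a n))\<^sup>2 \<le> 2 * (w n)\<^sup>2 + (e n)\<^sup>2 / (2 * amin\<^sup>2)" if "n \<in> I" for n
  proof -
    have "(w n - e n / (2 * a n))\<^sup>2 \<le> 2 * (w n)\<^sup>2 + 2 * (e n / (2 * a n))\<^sup>2"
      using sum_squares_ge_zero[of "w n + e n / (2 * a n)" 0] by (simp add: power2_eq_square algebra_simps)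
    moreover have "(e n / (2 * a n))\<^sup>2 \<le> (e n)\<^sup>2 / (4 * amin\<^sup>2)"
      using assms that by (simp add: power_divide power_mult_distrib)
        (intro divide_left_mono mult_left_mono power_mono; auto)
    ultimately show ?thesis by simp
  qed
  then have "(\<Sum>n\<in>I. (w n - e n / (2 * a n))\<^sup>2) \<le> (\<Sum>n\<in>I. 2 * (w n)\<^sup>2 + (e n)\<^sup>2 / (2 * amin\<^sup>2))"
    by (rule sum_mono)
  also have "\<dots> = 2 * (\<Sum>n\<in>I. (w n)\<^sup>2) + (\<Sum>n\<in>I. (e n)\<^sup>2) / (2 * amin\<^sup>2)"
    by (simp add: sum.distrib sum_distrib_left sum_divide_distrib)
  finally show ?thesis .
qed

lemma sum_sq_div_max_le:
  fixes e a :: "'a \<Rightarrow> real"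
  assumes "\<forall>n\<in>I. 0 < a n \<and> a n \<le> amax"
  shows "(\<Sum>n\<in>I. (e n)\<^sup>2) / (2 * amax) \<le> (\<Sum>n\<in>I. e n * (e n / (2 * a n)))"
  unfolding sum_divide_distrib
proof (rule sum_mono)
  fix n assume "n \<in> I"
  then have "(e n)\<^sup>2 / (2 * amax) \<le> (e n)\<^sup>2 / (2 * a n)"
    using assms by (intro divide_left_mono) auto
  then show "(e n)\<^sup>2 / (2 * amax) \<le> e n * (e n / (2 * a n))" by (simp add: power2_eq_square)
qed

lemma bid_update_sq_dist_le:
  fixes a b b' bs c xo xs :: "'a \<Rightarrow> real"
  assumes ab: "\<forall>n\<in>I. 0 < amin \<and> amin \<le> a n \<and> a n \<le> amax"
    and bs: "\<forall>n\<in>I. bs n = 2 * a n * xs n + c n"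
    and "0 < \<beta>"
    and cross: "(\<Sum>n\<in>I. (b n - bs n) * (xo n - xs n)) \<le> 0"
    and spread: "(\<Sum>n\<in>I. (xo n - xs n)\<^sup>2) \<le> Y"
    and upd: "\<forall>n\<in>I. b' n = b n + \<beta> * (xo n - (b n - c n) / (2 * a n))"
  shows "(\<Sum>n\<in>I. (b' n - bs n)\<^sup>2) \<le> (\<Sum>n\<in>I. (b n - bs n)\<^sup>2)
          - \<beta> * (\<Sum>n\<in>I. (b n - bs n)\<^sup>2) / amax
          + \<beta>\<^sup>2 * (2 * Y + (\<Sum>n\<in>I. (b n - bs n)\<^sup>2) / (2 * amin\<^sup>2))"
proof -
  define e where "e n = b n - bs n" for n
  define w where "w n = xo n - xs n" for n
  define u where "u n = e n / (2 * a n)" for n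
  define S where "S = (\<Sum>n\<in>I. (e n)\<^sup>2)"
  have eq: "b' n - bs n = e n + \<beta> * (w n - u n)" if "n \<in> I" for n
  proof -
    have "0 < a n" using ab that by (fastforce intro: less_le_trans)
    then have "(b n - c n) / (2 * a n) = u n + xs n"
      using bs that unfolding u_def e_def by (simp add: field_simps)
    then have "b' n = b n + \<beta> * (xo n - (u n + xs n))" using upd that by simp
    then show ?thesis unfolding e_def w_def by (simp add: algebra_simps)
  qed
  have "(b' n - bs n)\<^sup>2 = (e n)\<^sup>2 + 2 * \<beta> * (e n * w n) - 2 * \<beta> * (e n * u n) + \<beta>\<^sup>2 * (w n - u n)\<^sup>2"
    if "n \<in> I" for n
    unfolding eq[OF that] by (simp add: power2_eq_square algebra_simps)
  then have "(\<Sum>n\<in>I. (b' n - bs n)\<^sup>2)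
      = (\<Sum>n\<in>I. (e n)\<^sup>2 + 2 * \<beta> * (e n * w n) - 2 * \<beta> * (e n * u n) + \<beta>\<^sup>2 * (w n - u n)\<^sup>2)"
    by (rule sum.cong[OF refl])
  also have "\<dots> = S + 2 * \<beta> * (\<Sum>n\<in>I. e n * w n) - 2 * \<beta> * (\<Sum>n\<in>I. e n * u n)
      + \<beta>\<^sup>2 * (\<Sum>n\<in>I. (w n - u n)\<^sup>2)"
    unfolding S_def by (simp add: sum.distrib sum_subtractf sum_distrib_left)
  also have "\<dots> \<le> S - 2 * \<beta> * (S / (2 * amax)) + \<beta>\<^sup>2 * (2 * Y + S / (2 * amin\<^sup>2))"
  proof -
    have "S / (2 * amax) \<le> (\<Sum>n\<in>I. e n * u n)"
      using sum_sq_div_max_le[of I a amax e] ab unfolding S_def u_def by force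
    moreover have "(\<Sum>n\<in>I. (w n - u n)\<^sup>2) \<le> 2 * Y + S / (2 * amin\<^sup>2)"
      using sum_sq_diff_scaled_le[of I amin a w e] ab spread unfolding u_def w_def S_def by force
    ultimately show ?thesis
      using \<open>0 < \<beta>\<close> cross mult_left_mono[of _ _ "\<beta>\<^sup>2"] mult_left_mono[of _ _ "2 * \<beta>"]
        mult_nonneg_nonpos[of "2 * \<beta>"]
      unfolding e_def w_def by (smt (verit) zero_le_power2)
  qed
  finally show ?thesis unfolding S_def e_def by simp
qed

lemma step_bound_mult_le:
  assumes "0 \<le> \<beta>" and "\<beta> \<le> step_bound amax amin Y r" and "0 < amin" and "0 < r"
  shows "\<beta> * (1 / (2 * amin\<^sup>2) + 16 * Y\<^sup>2 / r\<^sup>2) \<le> 1 / (2 * amax)"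
proof -
  define K where "K = 1 / (2 * amin\<^sup>2) + 16 * Y\<^sup>2 / r\<^sup>2"
  have "0 < K" unfolding K_def using assms by (simp add: add_pos_nonneg)
  then have "step_bound amax amin Y r * K = 1 / (2 * amax)"
    unfolding step_bound_def K_def[symmetric] by simp
  then show ?thesis
    using assms(2) \<open>0 < K\<close> mult_right_mono[of \<beta> "step_bound amax amin Y r" K]
    unfolding K_def by simp
qed

lemma step_bound_contraction:
  assumes "0 < \<beta>" and "\<alpha> \<le> \<beta>" and "\<beta> \<le> step_bound amax amin Y r"
    and "0 < amin" and "0 < amax" and "0 < r" and "r\<^sup>2 \<le> S"
    and step: "S' \<le> S - \<beta> * S / amax + \<beta>\<^sup>2 * (4 * Y\<^sup>2 + S / (2 * amin\<^sup>2))"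
  shows "S' \<le> (1 - \<alpha> / (2 * amax)) * S"
proof -
  have "0 \<le> S" using assms(7) zero_le_power2 order_trans by blast
  have "1 \<le> S / r\<^sup>2" using assms(6,7) by simp
  then have "16 * Y\<^sup>2 * 1 \<le> 16 * Y\<^sup>2 * (S / r\<^sup>2)" by (intro mult_left_mono) auto
  then have "4 * Y\<^sup>2 \<le> 16 * Y\<^sup>2 * (S / r\<^sup>2)" by (smt (verit) zero_le_power2)
  then have "4 * Y\<^sup>2 + S / (2 * amin\<^sup>2) \<le> S * (1 / (2 * amin\<^sup>2) + 16 * Y\<^sup>2 / r\<^sup>2)"
    by (simp add: algebra_simps)
  then have "\<beta>\<^sup>2 * (4 * Y\<^sup>2 + S / (2 * amin\<^sup>2)) \<le> \<beta>\<^sup>2 * (S * (1 / (2 * amin\<^sup>2) + 16 * Y\<^sup>2 / r\<^sup>2))"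
    by (intro mult_left_mono) auto
  also have "\<dots> = (\<beta> * S) * (\<beta> * (1 / (2 * amin\<^sup>2) + 16 * Y\<^sup>2 / r\<^sup>2))"
    by (simp add: power2_eq_square)
  also have "\<dots> \<le> (\<beta> * S) * (1 / (2 * amax))"
    using step_bound_mult_le[of \<beta> amax amin Y r] assms(1,3,4,6) \<open>0 \<le> S\<close>
    by (intro mult_left_mono) auto
  finally have "S' \<le> S - \<beta> * S / (2 * amax)"
    using step by (simp add: field_simps)
  also have "\<dots> \<le> S - \<alpha> * S / (2 * amax)"
    using assms(2,5) \<open>0 \<le> S\<close> by (simp add: divide_right_mono mult_right_mono)
  finally show ?thesis by (simp add: algebra_simps)
qed

lemma step_bound_capped:
  assumes "0 < \<beta>" and "\<beta> \<le> step_bound amax amin Y r"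
    and "0 < amin" and "0 < amax" and "0 < r" and "0 \<le> S" and "S < r\<^sup>2"
    and step: "S' \<le> S - \<beta> * S / amax + \<beta>\<^sup>2 * (4 * Y\<^sup>2 + S / (2 * amin\<^sup>2))"
  shows "S' \<le> (1 + step_bound amax amin Y r / (2 * amax)) * r\<^sup>2"
proof -
  have "r\<^sup>2 * (1 / (2 * amin\<^sup>2) + 16 * Y\<^sup>2 / r\<^sup>2) = r\<^sup>2 / (2 * amin\<^sup>2) + 16 * Y\<^sup>2"
    using assms(5) by (simp add: field_simps)
  moreover have "S / (2 * amin\<^sup>2) \<le> r\<^sup>2 / (2 * amin\<^sup>2)"
    using assms(3,7) by (simp add: divide_right_mono)
  ultimately have "4 * Y\<^sup>2 + S / (2 * amin\<^sup>2) \<le> r\<^sup>2 * (1 / (2 * amin\<^sup>2) + 16 * Y\<^sup>2 / r\<^sup>2)"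
    by (smt (verit) zero_le_power2)
  then have "\<beta>\<^sup>2 * (4 * Y\<^sup>2 + S / (2 * amin\<^sup>2)) \<le> \<beta>\<^sup>2 * (r\<^sup>2 * (1 / (2 * amin\<^sup>2) + 16 * Y\<^sup>2 / r\<^sup>2))"
    by (intro mult_left_mono) auto
  also have "\<dots> = (\<beta> * r\<^sup>2) * (\<beta> * (1 / (2 * amin\<^sup>2) + 16 * Y\<^sup>2 / r\<^sup>2))"
    by (simp add: power2_eq_square)
  also have "\<dots> \<le> (step_bound amax amin Y r * r\<^sup>2) * (1 / (2 * amax))"
    using step_bound_mult_le[of \<beta> amax amin Y r] assms(1-5)
    by (intro mult_mono) (auto simp: step_bound_def)
  finally have "\<beta>\<^sup>2 * (4 * Y\<^sup>2 + S / (2 * amin\<^sup>2)) \<le> step_bound amax amin Y r / (2 * amax) * r\<^sup>2"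
    by simp
  moreover have "0 \<le> \<beta> * S / amax" using assms(1,4,6) by simp
  ultimately show ?thesis using step \<open>S < r\<^sup>2\<close> by (simp add: algebra_simps)
qed

lemma geometric_decay_while_above:
  fixes D :: "nat \<Rightarrow> real"
  assumes "0 \<le> \<rho>"
    and contract: "\<And>k. 1 \<le> k \<Longrightarrow> r \<le> D k \<Longrightarrow> (D (Suc k))\<^sup>2 \<le> \<rho> * (D k)\<^sup>2"
  shows "1 \<le> m \<Longrightarrow> \<forall>k\<in>{1..<m}. r \<le> D k \<Longrightarrow> (D m)\<^sup>2 \<le> \<rho> ^ (m - 1) * (D 1)\<^sup>2"
proof (induction m)
  case (Suc m)
  show ?case
  proof (cases "m = 0")
    case False
    then have "(D (Suc m))\<^sup>2 \<le> \<rho> * (D m)\<^sup>2" using contract Suc.prems(2) by simp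
    also have "\<dots> \<le> \<rho> * (\<rho> ^ (m - 1) * (D 1)\<^sup>2)"
      using Suc False \<open>0 \<le> \<rho>\<close> by (intro mult_left_mono) auto
    also have "\<dots> = \<rho> ^ (Suc m - 1) * (D 1)\<^sup>2"
      using False by (simp add: power_eq_if)
    finally show ?thesis .
  qed simp
qed simp

text \<open>After the first entry into the ball of radius \<open>r\<close>, a jump leaves the sequence within \<open>\<surd>M r\<close>,
  and from there the contraction only shrinks it until it is below \<open>r\<close> again.\<close>

lemma threshold_descent:
  fixes D :: "nat \<Rightarrow> real"
  assumes nonneg: "\<And>k. 0 \<le> D k" and "0 < \<rho>" and "\<rho> < 1" and "1 \<le> M" and "0 < r" and "r < D 1"
    and contract: "\<And>k. 1 \<le> k \<Longrightarrow> r \<le> D k \<Longrightarrow> (D (Suc k))\<^sup>2 \<le> \<rho> * (D k)\<^sup>2"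
    and capped: "\<And>k. 1 \<le> k \<Longrightarrow> D k < r \<Longrightarrow> (D (Suc k))\<^sup>2 \<le> M * r\<^sup>2"
  shows "\<exists>l\<ge>1. D l < r \<and>
           (\<forall>k\<in>{1..l-1}. r \<le> D k \<and> D (Suc k) \<le> \<rho> powr (real k / 2) * D 1) \<and>
           (\<forall>k\<ge>l. D k \<le> sqrt M * r)"
proof -
  note decay = geometric_decay_while_above[of \<rho> r D, OF less_imp_le[OF \<open>0 < \<rho>\<close>] contract]
  have "\<exists>l. 1 \<le> l \<and> D l < r"
  proof (rule ccontr)
    assume "\<not> ?thesis"
    then have above: "\<forall>k\<ge>1. r \<le> D k" by (auto simp: not_less)
    have "0 < r\<^sup>2 / (D 1)\<^sup>2" using \<open>0 < r\<close> \<open>r < D 1\<close> by simp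
    then obtain m where "\<rho> ^ m < r\<^sup>2 / (D 1)\<^sup>2" using real_arch_pow_inv \<open>\<rho> < 1\<close> by blast
    then have "\<rho> ^ m * (D 1)\<^sup>2 < r\<^sup>2" using \<open>0 < r\<close> \<open>r < D 1\<close> by (simp add: pos_less_divide_eq)
    moreover have "(D (Suc m))\<^sup>2 \<le> \<rho> ^ m * (D 1)\<^sup>2" using decay[of "Suc m"] above by simp
    moreover have "r\<^sup>2 \<le> (D (Suc m))\<^sup>2" using above \<open>0 < r\<close> by (simp add: power_mono)
    ultimately show False by linarith
  qed
  then obtain l where l: "1 \<le> l" "D l < r" and before: "\<forall>k\<in>{1..<l}. r \<le> D k"
    using exists_least_iff[of "\<lambda>l. 1 \<le> l \<and> D l < r"] by (auto simp: not_less)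
  have after: "(D k)\<^sup>2 \<le> M * r\<^sup>2" if "l \<le> k" for k
    using that
  proof (induction k rule: dec_induct)
    case base
    have "(D l)\<^sup>2 \<le> r\<^sup>2" using l nonneg[of l] by (simp add: power_mono)
    also have "\<dots> \<le> M * r\<^sup>2" using \<open>1 \<le> M\<close> mult_right_mono[of 1 M "r\<^sup>2"] by simp
    finally show ?case .
  next
    case (step k)
    show ?case
    proof (cases "D k < r")
      case True
      then show ?thesis using capped step l by simp
    next
      case False
      then have "(D (Suc k))\<^sup>2 \<le> \<rho> * (D k)\<^sup>2" using contract step l by simp
      also have "\<dots> \<le> (D k)\<^sup>2" using \<open>\<rho> < 1\<close> mult_right_mono[of \<rho> 1 "(D k)\<^sup>2"] by simp
      finally show ?thesis using step.IH by simp
    qed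
  qed
  show ?thesis
  proof (intro exI[of _ l] conjI ballI allI impI)
    fix k assume "k \<in> {1..l-1}"
    then show "r \<le> D k" using before by auto
    have "\<forall>j\<in>{1..<Suc k}. r \<le> D j" using before \<open>k \<in> {1..l-1}\<close> by auto
    then have "(D (Suc k))\<^sup>2 \<le> \<rho> ^ k * (D 1)\<^sup>2" using decay[of "Suc k"] by simp
    also have "\<dots> = (\<rho> powr (real k / 2) * D 1)\<^sup>2"
    proof -
      have "\<rho> powr (real k / 2) = sqrt (\<rho> ^ k)"
        using \<open>0 < \<rho>\<close> by (simp add: powr_half_sqrt_powr powr_realpow)
      then have "(\<rho> powr (real k / 2))\<^sup>2 = \<rho> ^ k"
        using \<open>0 < \<rho>\<close> by simp
      then show ?thesis by (simp only: power_mult_distrib)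
    qed
    finally show "D (Suc k) \<le> \<rho> powr (real k / 2) * D 1"
      by (rule power2_le_imp_le) (simp add: nonneg)
  next
    fix k assume "l \<le> k"
    then have "(D k)\<^sup>2 \<le> (sqrt M * r)\<^sup>2" using after \<open>1 \<le> M\<close> by (simp add: power_mult_distrib)
    then show "D k \<le> sqrt M * r"
      by (rule power2_le_imp_le) (use \<open>0 < r\<close> \<open>1 \<le> M\<close> in simp)
  qed (use l in auto)
qed

lemma bid_dist_sq: "(bid_dist N b b')\<^sup>2 = (\<Sum>n\<in>{1..N}. (b n - b' n)\<^sup>2)"
  unfolding bid_dist_def by (simp add: sum_nonneg)

lemma bid_adjust_exec_unclipped:
  assumes net: "network_ok Nb E zbar G y N a c"
    and exec: "bid_adjust_exec Nb E zbar G y N a c beta b xo zo"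
    and beta_lt: "\<forall>k\<ge>1. \<forall>n\<in>{1..N}. 0 < beta k \<and> beta k < 2 * a n"
    and "1 \<le> k" and "n \<in> {1..N}"
  shows "c n \<le> b k n \<and> b (Suc k) n = b k n + beta k * (xo k n - (b k n - c n) / (2 * a n))"
proof -
  have ac: "0 < a n" "0 \<le> c n" using net \<open>n \<in> {1..N}\<close> unfolding network_ok_def by auto
  have update: "c n \<le> b k n + beta k * (xo k n - (b k n - c n) / (2 * a n)) \<and>
      b (Suc k) n = b k n + beta k * (xo k n - (b k n - c n) / (2 * a n))"
    if "1 \<le> k" and "c n \<le> b k n" for k
  proof -
    have "0 \<le> xo k n"
      using exec \<open>1 \<le> k\<close> \<open>n \<in> {1..N}\<close> unfolding bid_adjust_exec_def sdcopf_opt_def opf_feasible_def by blast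
    moreover have "0 < beta k" "beta k / (2 * a n) \<le> 1"
      using beta_lt \<open>1 \<le> k\<close> \<open>n \<in> {1..N}\<close> ac by (auto simp: less_imp_le)
    ultimately have "0 \<le> beta k * xo k n" "beta k * ((b k n - c n) / (2 * a n)) \<le> b k n - c n"
      using \<open>c n \<le> b k n\<close> mult_right_mono[of "beta k / (2 * a n)" 1 "b k n - c n"] by simp_all
    then have "c n \<le> b k n + beta k * (xo k n - (b k n - c n) / (2 * a n))"
      by (simp add: right_diff_distrib)
    moreover have "b (Suc k) n = max 0 (b k n + beta k * (xo k n - best_response a c n (b k n)))"
      using exec \<open>1 \<le> k\<close> \<open>n \<in> {1..N}\<close> unfolding bid_adjust_exec_def by blast
    ultimately show ?thesis
      using best_response_eq[of a n c "b k n"] ac \<open>c n \<le> b k n\<close> by simp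
  qed
  have "c n \<le> b k n" using \<open>1 \<le> k\<close>
  proof (induction k rule: dec_induct)
    case base
    then show ?case using exec \<open>n \<in> {1..N}\<close> unfolding bid_adjust_exec_def by simp
  next
    case (step m)
    then show ?case using update by simp
  qed
  then show ?thesis using update \<open>1 \<le> k\<close> by blast
qed

lemma network_ok_Min_Max_bounds:
  assumes "network_ok Nb E zbar G y N a c" and "1 \<le> N"
  shows "\<forall>n\<in>{1..N}. 0 < Min (a ` {1..N}) \<and> Min (a ` {1..N}) \<le> a n \<and> a n \<le> Max (a ` {1..N})"
proof -
  have "Min (a ` {1..N}) \<in> a ` {1..N}" using \<open>1 \<le> N\<close> by (intro Min_in) auto
  moreover have "\<forall>n\<in>{1..N}. 0 < a n" using assms(1) unfolding network_ok_def by (elim conjE) blast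
  ultimately show ?thesis by auto
qed

lemma bid_adjust_exec_sq_dist_step:
  assumes net: "network_ok Nb E zbar G y N a c"
    and opt: "dcopf_opt Nb E zbar G y N a c xs zs"
    and bs: "\<forall>n\<in>{1..N}. bs n = 2 * a n * xs n + c n"
    and exec: "bid_adjust_exec Nb E zbar G y N a c beta b xo zo"
    and beta_lt: "\<forall>k\<ge>1. \<forall>n\<in>{1..N}. 0 < beta k \<and> beta k < 2 * a n"
    and ab: "\<forall>n\<in>{1..N}. 0 < amin \<and> amin \<le> a n \<and> a n \<le> amax"
    and "1 \<le> k"
  shows "(bid_dist N (b (Suc k)) bs)\<^sup>2 \<le> (bid_dist N (b k) bs)\<^sup>2
          - beta k * (bid_dist N (b k) bs)\<^sup>2 / amax
          + (beta k)\<^sup>2 * (4 * (\<Sum>i\<in>{1..Nb}. y i)\<^sup>2 + (bid_dist N (b k) bs)\<^sup>2 / (2 * amin\<^sup>2))"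
proof -
  let ?Y = "\<Sum>i\<in>{1..Nb}. y i"
  have opt_k: "sdcopf_opt Nb E zbar G y N (b k) (xo k) (zo k)"
    using exec \<open>1 \<le> k\<close> unfolding bid_adjust_exec_def by blast
  have opt_s: "sdcopf_opt Nb E zbar G y N bs xs zs"
    by (rule dcopf_opt_imp_sdcopf_opt_marginal_costs[OF net opt bs])
  have feas: "opf_feasible Nb E zbar G y N (xo k) (zo k)" "opf_feasible Nb E zbar G y N xs zs"
    using opt_k opt_s unfolding sdcopf_opt_def by blast+
  have "\<forall>n\<in>{1..N}. 0 \<le> xo k n \<and> 0 \<le> xs n" using feas unfolding opf_feasible_def by blast
  then have "(\<Sum>n\<in>{1..N}. (xo k n - xs n)\<^sup>2) \<le> 2 * ?Y\<^sup>2"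
    using opf_feasible_total_generation[OF net feas(1)] opf_feasible_total_generation[OF net feas(2)]
    by (intro sum_sq_diff_le_of_equal_sums) simp_all
  moreover have "0 < beta k" using exec \<open>1 \<le> k\<close> unfolding bid_adjust_exec_def by blast
  moreover have "\<forall>n\<in>{1..N}. b (Suc k) n = b k n + beta k * (xo k n - (b k n - c n) / (2 * a n))"
    using bid_adjust_exec_unclipped[OF net exec beta_lt \<open>1 \<le> k\<close>] by blast
  ultimately have "(\<Sum>n\<in>{1..N}. (b (Suc k) n - bs n)\<^sup>2) \<le> (\<Sum>n\<in>{1..N}. (b k n - bs n)\<^sup>2)
      - beta k * (\<Sum>n\<in>{1..N}. (b k n - bs n)\<^sup>2) / amax
      + (beta k)\<^sup>2 * (2 * (2 * ?Y\<^sup>2) + (\<Sum>n\<in>{1..N}. (b k n - bs n)\<^sup>2) / (2 * amin\<^sup>2))"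
    by (intro bid_update_sq_dist_le[OF ab bs _ sdcopf_opt_monotone[OF opt_k opt_s]])
  then show ?thesis unfolding bid_dist_sq by simp
qed

theorem theorem4p5:
  fixes Nb N :: nat and E :: "(nat \<times> nat) set" and zbar :: "nat \<times> nat \<Rightarrow> real"
    and G :: "nat \<Rightarrow> nat set" and y a c xs bs beta :: "nat \<Rightarrow> real"
    and zs :: "nat \<times> nat \<Rightarrow> real"
    and b xo :: "nat \<Rightarrow> nat \<Rightarrow> real" and zo :: "nat \<Rightarrow> nat \<times> nat \<Rightarrow> real"
    and r alpha :: real
  assumes net: "network_ok Nb E zbar G y N a c"
    and opt: "dcopf_opt Nb E zbar G y N a c xs zs"
    and uniq: "\<And>x z. dcopf_opt Nb E zbar G y N a c x z \<Longrightarrow> \<forall>n\<in>{1..N}. x n = xs n"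
    and buses: "\<forall>i\<in>{1..Nb}. G i = {} \<or> card (G i) \<ge> 2"
    and xpos: "\<forall>n\<in>{1..N}. xs n > 0"
    and bs_def: "\<forall>n\<in>{1..N}. bs n = 2 * a n * xs n + c n"
    and exec: "bid_adjust_exec Nb E zbar G y N a c beta b xo zo"
    and beta_lt: "\<forall>k\<ge>1. \<forall>n\<in>{1..N}. 0 < beta k \<and> beta k < 2 * a n"
    and r_pos: "0 < r" and r_lt: "r < bid_dist N (b 1) bs"
    and alpha_pos: "alpha > 0"
    and beta_bounds: "\<forall>k\<ge>1. alpha \<le> beta k \<and>
        beta k \<le> step_bound (Max (a ` {1..N})) (Min (a ` {1..N})) (\<Sum>i\<in>{1..Nb}. y i) r"
  shows "\<exists>l\<ge>1. bid_dist N (b l) bs < r \<and>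
           (\<forall>k\<in>{1..l-1}. bid_dist N (b k) bs \<ge> r \<and>
              bid_dist N (b (Suc k)) bs
                \<le> (1 - alpha / (2 * Max (a ` {1..N}))) powr (real k / 2) * bid_dist N (b 1) bs) \<and>
           (\<forall>k\<ge>l. bid_dist N (b k) bs
              \<le> sqrt (1 + step_bound (Max (a ` {1..N})) (Min (a ` {1..N})) (\<Sum>i\<in>{1..Nb}. y i) r
                         / (2 * Max (a ` {1..N}))) * r)"
proof -
  define amax where "amax = Max (a ` {1..N})"
  define amin where "amin = Min (a ` {1..N})"
  define Y where "Y = (\<Sum>i\<in>{1..Nb}. y i)"
  define B where "B = step_bound amax amin Y r"
  define D where "D k = bid_dist N (b k) bs" for k
  have D_nonneg: "0 \<le> D k" for k by (simp add: D_def bid_dist_def sum_nonneg)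
  have "1 \<le> N"
    using r_pos r_lt by (cases N) (simp_all add: bid_dist_def)
  have ab: "\<forall>n\<in>{1..N}. 0 < amin \<and> amin \<le> a n \<and> a n \<le> amax"
    unfolding amin_def amax_def by (rule network_ok_Min_Max_bounds[OF net \<open>1 \<le> N\<close>])
  have beta: "0 < beta k" "alpha \<le> beta k" "beta k \<le> B" if "1 \<le> k" for k
    using beta_bounds alpha_pos that unfolding B_def amax_def amin_def Y_def by auto
  have "0 < amin" "0 < amax" using ab \<open>1 \<le> N\<close> by fastforce+
  have "alpha \<le> beta 1" "beta 1 < 2 * a 1" "a 1 \<le> amax" using beta[of 1] beta_lt ab \<open>1 \<le> N\<close> by auto
  then have "alpha < 2 * amax" by linarith
  have step: "(D (Suc k))\<^sup>2 \<le> (D k)\<^sup>2 - beta k * (D k)\<^sup>2 / amax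
      + (beta k)\<^sup>2 * (4 * Y\<^sup>2 + (D k)\<^sup>2 / (2 * amin\<^sup>2))" if "1 \<le> k" for k
    unfolding D_def Y_def by (rule bid_adjust_exec_sq_dist_step[OF net opt bs_def exec beta_lt ab that])
  have "\<exists>l\<ge>1. D l < r \<and>
      (\<forall>k\<in>{1..l-1}. r \<le> D k \<and> D (Suc k) \<le> (1 - alpha / (2 * amax)) powr (real k / 2) * D 1) \<and>
      (\<forall>k\<ge>l. D k \<le> sqrt (1 + B / (2 * amax)) * r)"
  proof (rule threshold_descent)
    fix k assume "1 \<le> k" "r \<le> D k"
    then have "r\<^sup>2 \<le> (D k)\<^sup>2" using r_pos by (simp add: power_mono)
    with beta[OF \<open>1 \<le> k\<close>] show "(D (Suc k))\<^sup>2 \<le> (1 - alpha / (2 * amax)) * (D k)\<^sup>2"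
      unfolding B_def
      by (rule step_bound_contraction[OF _ _ _ \<open>0 < amin\<close> \<open>0 < amax\<close> r_pos _ step[OF \<open>1 \<le> k\<close>]])
  next
    fix k assume "1 \<le> k" "D k < r"
    with D_nonneg[of k] have "(D k)\<^sup>2 < r\<^sup>2" "0 \<le> (D k)\<^sup>2" by (simp_all add: power_strict_mono)
    with beta[OF \<open>1 \<le> k\<close>] show "(D (Suc k))\<^sup>2 \<le> (1 + B / (2 * amax)) * r\<^sup>2"
      unfolding B_def
      by (intro step_bound_capped[OF _ _ \<open>0 < amin\<close> \<open>0 < amax\<close> r_pos _ _ step[OF \<open>1 \<le> k\<close>]])
  qed (use D_nonneg \<open>0 < amax\<close> \<open>alpha < 2 * amax\<close> alpha_pos beta[of 1] r_pos r_lt in \<open>auto simp: D_def\<close>)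
  then show ?thesis unfolding D_def B_def amax_def amin_def Y_def .
qed

end
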